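(* Assume $n\ge2$. Then at most one zero of $F$ is acceptable. Consequently, the maximum-likelihood linear model $f(x)=\lambda(1+a(x-x_A))$ with non-negative Poisson means in all bins, obtained from an acceptable zero $a$ of $F$ together with $\lambda=\lambda(a)$, is unique when it exists.
   Context: Data: an integer $N\ge 2$, reals $x_A<x_B$, $R=x_B-x_A$, and bins $i=1,\dots,N$ with widths $\Delta x_i>0$ and centers $x_i$ that tile $[x_A,x_B]$ contiguously in increasing order, so that $x_1-x_A=\Delta x_1/2$, $x_N-x_A=R-\Delta x_N/2$ and $0<x_1-x_A<\dots<x_N-x_A<R$. The counts are $y_i\in\{0,1,2,\dots\}$, $M=\sum_i y_i$, and $n$ is the number of indices with $y_i\ge1$. Write $d_i=x_i-x_A$. Define $$g(a)=\sum_{i=1}^N y_i\frac{d_i}{1+a d_i}$$ for $a\notin\{-1/d_i: y_i\ge 1\}$. Define $$F(a)=1+\frac R2\Big(a-\frac{M}{g(a)}\Big)$$ wherever $g(a)$ is finite and nonzero; at poles of $g$, $F(a)=1+aR/2$ by continuity. Let $\lambda(a)=M/(R(1+aR/2))$ for $a\neq-2/R$. A zero $a^*$ of $F$ is called acceptable if $a^*\ne-2/R$ and $\lambda(a^* )(1+a^*d_i)\ge0$ for all $i$, i.e. the Poisson means $\mu_i=\lambda(a^* )(1+a^*d_i)\Delta x_i$ are all non-negative. *)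

theory Defs
  imports Complex_Main
begin

text \<open>Bins are indexed by i = 1..N; w i is the width Delta x_i, c i the center x_i,
  y i the count.  d i = x_i - x_A.\<close>

definition Mtot :: "nat \<Rightarrow> (nat \<Rightarrow> nat) \<Rightarrow> real" where
  "Mtot N y = (\<Sum>i=1..N. real (y i))"

definition nocc :: "nat \<Rightarrow> (nat \<Rightarrow> nat) \<Rightarrow> nat" where
  "nocc N y = card {i \<in> {1..N}. y i \<ge> 1}"

definition gfun :: "nat \<Rightarrow> real \<Rightarrow> (nat \<Rightarrow> real) \<Rightarrow> (nat \<Rightarrow> nat) \<Rightarrow> real \<Rightarrow> real" where
  "gfun N xA c y a = (\<Sum>i=1..N. real (y i) * (c i - xA) / (1 + a * (c i - xA)))"

definition is_pole :: "nat \<Rightarrow> real \<Rightarrow> (nat \<Rightarrow> real) \<Rightarrow> (nat \<Rightarrow> nat) \<Rightarrow> real \<Rightarrow> bool" where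
  "is_pole N xA c y a = (\<exists>i\<in>{1..N}. y i \<ge> 1 \<and> 1 + a * (c i - xA) = 0)"

text \<open>F as a partial function: None where F is undefined (g finite and zero).\<close>
definition Ffun :: "nat \<Rightarrow> real \<Rightarrow> real \<Rightarrow> (nat \<Rightarrow> real) \<Rightarrow> (nat \<Rightarrow> nat) \<Rightarrow> real \<Rightarrow> real option" where
  "Ffun N xA xB c y a =
     (if is_pole N xA c y a then Some (1 + a * (xB - xA) / 2)
      else if gfun N xA c y a = 0 then None
      else Some (1 + (xB - xA) / 2 * (a - Mtot N y / gfun N xA c y a)))"

definition lam :: "nat \<Rightarrow> real \<Rightarrow> real \<Rightarrow> (nat \<Rightarrow> nat) \<Rightarrow> real \<Rightarrow> real" where
  "lam N xA xB y a = Mtot N y / ((xB - xA) * (1 + a * (xB - xA) / 2))"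

definition acceptable :: "nat \<Rightarrow> real \<Rightarrow> real \<Rightarrow> (nat \<Rightarrow> real) \<Rightarrow> (nat \<Rightarrow> nat) \<Rightarrow> real \<Rightarrow> bool" where
  "acceptable N xA xB c y a \<longleftrightarrow>
     Ffun N xA xB c y a = Some 0 \<and> a \<noteq> -2 / (xB - xA) \<and>
     (\<forall>i\<in>{1..N}. lam N xA xB y a * (1 + a * (c i - xA)) \<ge> 0)"

end

theory Submission
  imports Defs
begin

text \<open>With \<open>\<mu>(x) = \<lambda>(1 + a x)\<close>, an acceptable zero \<open>a\<close> of \<open>F\<close> together with \<open>\<lambda> = \<lambda>(a)\<close>
  solves the likelihood equations \<open>\<Sum> y\<^sub>i / \<mu>(d\<^sub>i) = R\<close> and \<open>\<Sum> y\<^sub>i d\<^sub>i / \<mu>(d\<^sub>i) = R\<^sup>2/2\<close>,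
  with \<open>\<mu>(d\<^sub>i) > 0\<close> on every occupied bin.  If two affine functions \<open>f, h\<close> both solve them,
  then \<open>\<Sum> y\<^sub>i (h - f)\<^sup>2/(f h) = \<Sum> y\<^sub>i (h - f)/f - \<Sum> y\<^sub>i (h - f)/h = 0\<close>, because \<open>h - f\<close> is
  affine and so both sums are the same combination of the two equations.  Hence \<open>f = h\<close> on
  every occupied bin, and two occupied bins have distinct centres, which pins down the affine
  function.\<close>

lemma affine_eq_on_support_if_moments_eq:
  fixes S :: "'a set" and y d :: "'a \<Rightarrow> real"
  assumes "finite S" and y_nonneg: "\<And>i. i \<in> S \<Longrightarrow> y i \<ge> 0"
    and pos: "\<And>i. i \<in> S \<Longrightarrow> y i > 0 \<Longrightarrow> l1 + b1 * d i > 0 \<and> l2 + b2 * d i > 0"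
    and "(\<Sum>i\<in>S. y i / (l1 + b1 * d i)) = P" "(\<Sum>i\<in>S. y i * d i / (l1 + b1 * d i)) = Q"
    and "(\<Sum>i\<in>S. y i / (l2 + b2 * d i)) = P" "(\<Sum>i\<in>S. y i * d i / (l2 + b2 * d i)) = Q"
    and "i \<in> S" "y i > 0"
  shows "l1 + b1 * d i = l2 + b2 * d i"
proof -
  define f where "f l b i = l + b * d i" for l b i
  define \<delta> where "\<delta> i = f l2 b2 i - f l1 b1 i" for i
  have moment: "(\<Sum>i\<in>S. y i * \<delta> i / f l b i) = (l2 - l1) * P + (b2 - b1) * Q"
    if "(\<Sum>i\<in>S. y i / f l b i) = P" "(\<Sum>i\<in>S. y i * d i / f l b i) = Q" for l b
  proof -
    have "(\<Sum>i\<in>S. y i * \<delta> i / f l b i)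
        = (\<Sum>i\<in>S. (l2 - l1) * (y i / f l b i) + (b2 - b1) * (y i * d i / f l b i))"
      by (rule sum.cong) (simp_all add: \<delta>_def f_def algebra_simps
          flip: add_divide_distrib diff_divide_distrib)
    also have "\<dots> = (l2 - l1) * (\<Sum>i\<in>S. y i / f l b i) + (b2 - b1) * (\<Sum>i\<in>S. y i * d i / f l b i)"
      by (simp add: sum.distrib sum_distrib_left)
    finally show ?thesis
      using that by simp
  qed
  have f_pos: "f l1 b1 j > 0" "f l2 b2 j > 0" if "j \<in> S" "y j > 0" for j
    using pos that by (auto simp: f_def)
  define U where "U j = y j * (\<delta> j)\<^sup>2 / (f l1 b1 j * f l2 b2 j)" for j
  have U_eq: "U j = y j * \<delta> j / f l1 b1 j - y j * \<delta> j / f l2 b2 j" if "j \<in> S" for j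
  proof (cases "y j > 0")
    case True
    then have "f l1 b1 j \<noteq> 0" "f l2 b2 j \<noteq> 0"
      using f_pos that by (metis less_irrefl)+
    then show ?thesis
      unfolding U_def \<delta>_def by (simp add: field_simps power2_eq_square)
  next
    case False
    then have "y j = 0"
      using y_nonneg that by (simp add: not_less order.antisym)
    then show ?thesis
      by (simp add: U_def)
  qed
  have U_nonneg: "U j \<ge> 0" if "j \<in> S" for j
  proof (cases "y j > 0")
    case True
    then show ?thesis
      using f_pos[OF that True] unfolding U_def by simp
  next
    case False
    then have "y j = 0"
      using y_nonneg that by (simp add: not_less order.antisym)
    then show ?thesis
      by (simp add: U_def)
  qed
  have "(\<Sum>j\<in>S. U j) = (\<Sum>j\<in>S. y j * \<delta> j / f l1 b1 j) - (\<Sum>j\<in>S. y j * \<delta> j / f l2 b2 j)"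
    unfolding sum_subtractf[symmetric] by (rule sum.cong) (simp_all add: U_eq)
  also have "\<dots> = 0"
    using moment[of l1 b1] moment[of l2 b2] assms(4-7) by (simp add: f_def)
  finally have "U i = 0"
    using \<open>finite S\<close> \<open>i \<in> S\<close> U_nonneg sum_nonneg_eq_0_iff by blast
  then have "\<delta> i = 0"
    using f_pos[OF \<open>i \<in> S\<close> \<open>y i > 0\<close>] \<open>y i > 0\<close> by (simp add: U_def)
  then show ?thesis
    by (simp add: \<delta>_def f_def)
qed

lemma affine_eq_at_two_points:
  fixes l1 b1 l2 b2 s t :: real
  assumes "l1 + b1 * s = l2 + b2 * s" "l1 + b1 * t = l2 + b2 * t" "s \<noteq> t"
  shows "l1 = l2" "b1 = b2"
proof -
  have "(b1 - b2) * (s - t) = 0"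
    using assms(1,2) by (simp add: algebra_simps)
  then show "b1 = b2"
    using \<open>s \<noteq> t\<close> by simp
  then show "l1 = l2"
    using assms(1) by simp
qed

lemma bin_centers_strict_mono:
  fixes w c :: "nat \<Rightarrow> real"
  assumes w_pos: "\<forall>i\<in>{1..N}. w i > 0"
    and centers: "\<forall>i\<in>{1..N}. c i = xA + (\<Sum>j=1..<i. w j) + w i / 2"
    and "p < q" "p \<in> {1..N}" "q \<in> {1..N}"
  shows "c p < c q"
proof -
  have "(\<Sum>j=1..<q. w j) = (\<Sum>j=1..<p. w j) + (\<Sum>j=p..<q. w j)"
    using \<open>p < q\<close> \<open>p \<in> {1..N}\<close> by (simp add: sum.atLeastLessThan_concat)
  also have "(\<Sum>j=p..<q. w j) = w p + (\<Sum>j=Suc p..<q. w j)"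
    using \<open>p < q\<close> by (rule sum.atLeast_Suc_lessThan)
  finally have "(\<Sum>j=1..<q. w j) = (\<Sum>j=1..<p. w j) + w p + (\<Sum>j=Suc p..<q. w j)"
    by simp
  moreover have "(\<Sum>j=Suc p..<q. w j) \<ge> 0"
    using w_pos \<open>p \<in> {1..N}\<close> \<open>q \<in> {1..N}\<close> by (intro sum_nonneg less_imp_le) auto
  moreover have "w p > 0" "w q > 0"
    using w_pos \<open>p \<in> {1..N}\<close> \<open>q \<in> {1..N}\<close> by auto
  ultimately show ?thesis
    using centers \<open>p \<in> {1..N}\<close> \<open>q \<in> {1..N}\<close> by auto
qed

lemma two_occupied_bins:
  assumes "nocc N y \<ge> 2"
  obtains i j where "i \<in> {1..N}" "j \<in> {1..N}" "i \<noteq> j" "y i \<ge> 1" "y j \<ge> 1"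
proof -
  have "\<exists>i\<in>{k \<in> {1..N}. y k \<ge> 1}. \<exists>j\<in>{k \<in> {1..N}. y k \<ge> 1}. i \<noteq> j"
    using assms unfolding nocc_def numeral_2_eq_2 card_le_Suc_iff
    by (metis card.empty ex_in_conv insert_iff not_one_le_zero)
  then show ?thesis
    using that by blast
qed

lemma Mtot_pos:
  assumes "i \<in> {1..N}" "y i \<ge> 1"
  shows "Mtot N y > 0"
proof -
  have "real (y i) \<le> Mtot N y"
    unfolding Mtot_def using assms(1) by (intro member_le_sum) auto
  then show ?thesis
    using assms(2) by linarith
qed

lemma sum_reciprocal_eq_Mtot_minus_gfun:
  assumes "\<not> is_pole N xA c y a"
  shows "(\<Sum>i=1..N. real (y i) / (1 + a * (c i - xA))) = Mtot N y - a * gfun N xA c y a"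
proof -
  have "real (y i) / (1 + a * (c i - xA))
      = real (y i) - a * (real (y i) * (c i - xA) / (1 + a * (c i - xA)))" if "i \<in> {1..N}" for i
  proof (cases "y i \<ge> 1")
    case True
    then have "1 + a * (c i - xA) \<noteq> 0"
      using assms that unfolding is_pole_def by auto
    then show ?thesis
      by (simp add: field_simps)
  next
    case False
    then have "y i = 0"
      by simp
    then show ?thesis
      by simp
  qed
  then show ?thesis
    unfolding Mtot_def gfun_def by (simp add: sum_subtractf sum_distrib_left)
qed

lemma acceptable_gfun_closed_form:
  assumes "acceptable N xA xB c y a"
  shows "\<not> is_pole N xA c y a"
    and "2 + a * (xB - xA) \<noteq> 0"
    and "gfun N xA c y a = (xB - xA) * Mtot N y / (2 + a * (xB - xA))"
proof -
  have F: "Ffun N xA xB c y a = Some 0" and a: "a \<noteq> -2 / (xB - xA)"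
    using assms unfolding acceptable_def by auto
  show D: "2 + a * (xB - xA) \<noteq> 0"
  proof
    assume "2 + a * (xB - xA) = 0"
    then have "a * (xB - xA) = -2"
      by simp
    moreover from this have "xB - xA \<noteq> 0"
      by auto
    ultimately have "a = -2 / (xB - xA)"
      by (simp add: field_simps)
    with a show False
      by simp
  qed
  show no_pole: "\<not> is_pole N xA c y a"
  proof
    assume "is_pole N xA c y a"
    then have "1 + a * (xB - xA) / 2 = 0"
      using F unfolding Ffun_def by simp
    with D show False
      by (simp add: field_simps)
  qed
  have "gfun N xA c y a \<noteq> 0"
    using F no_pole unfolding Ffun_def by (metis option.distinct(1))
  moreover have "1 + (xB - xA) / 2 * (a - Mtot N y / gfun N xA c y a) = 0"
    using F no_pole \<open>gfun N xA c y a \<noteq> 0\<close> unfolding Ffun_def by simp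
  ultimately show "gfun N xA c y a = (xB - xA) * Mtot N y / (2 + a * (xB - xA))"
    using D by (simp add: field_simps)
qed

lemma acceptable_likelihood_equations:
  assumes acc: "acceptable N xA xB c y a" and "xA < xB" and "Mtot N y > 0"
  defines "l \<equiv> lam N xA xB y a"
  shows "\<And>i. i \<in> {1..N} \<Longrightarrow> real (y i) > 0 \<Longrightarrow> l + (l * a) * (c i - xA) > 0"
    and "(\<Sum>i=1..N. real (y i) / (l + (l * a) * (c i - xA))) = xB - xA"
    and "(\<Sum>i=1..N. real (y i) * (c i - xA) / (l + (l * a) * (c i - xA))) = (xB - xA)\<^sup>2 / 2"
proof -
  define R M g where "R = xB - xA" and "M = Mtot N y" and "g = gfun N xA c y a"
  note no_pole = acceptable_gfun_closed_form(1)[OF acc]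
  have "R > 0" "M > 0"
    using assms(2,3) by (simp_all add: R_def M_def)
  have D: "2 + a * R \<noteq> 0" and g: "g = R * M / (2 + a * R)"
    using acceptable_gfun_closed_form(2,3)[OF acc] by (simp_all add: R_def M_def g_def)
  have l: "l = 2 * M / (R * (2 + a * R))"
    unfolding l_def lam_def M_def R_def by (simp add: field_simps)
  have mean: "l + (l * a) * (c i - xA) = l * (1 + a * (c i - xA))" for i
    by (simp add: algebra_simps)
  show "l + (l * a) * (c i - xA) > 0" if "i \<in> {1..N}" "real (y i) > 0" for i
  proof -
    have "1 + a * (c i - xA) \<noteq> 0"
      using no_pole that unfolding is_pole_def by auto
    moreover have "l \<noteq> 0"
      using l D \<open>R > 0\<close> \<open>M > 0\<close> by simp
    moreover have "l * (1 + a * (c i - xA)) \<ge> 0"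
      using acc that(1) unfolding acceptable_def l_def by blast
    ultimately show ?thesis
      unfolding mean by (metis less_eq_real_def mult_eq_0_iff)
  qed
  have "(\<Sum>i=1..N. real (y i) / (l + (l * a) * (c i - xA))) = (M - a * g) / l"
    unfolding mean sum_reciprocal_eq_Mtot_minus_gfun[OF no_pole, symmetric] M_def g_def
    by (simp add: sum_divide_distrib ac_simps)
  also have "\<dots> = R"
  proof -
    have "M - a * g = 2 * M / (2 + a * R)"
      unfolding g using D by (simp add: field_simps)
    then show ?thesis
      using D \<open>R > 0\<close> \<open>M > 0\<close> unfolding l by simp
  qed
  finally show "(\<Sum>i=1..N. real (y i) / (l + (l * a) * (c i - xA))) = xB - xA"
    by (simp add: R_def)
  have "(\<Sum>i=1..N. real (y i) * (c i - xA) / (l + (l * a) * (c i - xA))) = g / l"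
    unfolding mean g_def gfun_def by (simp add: sum_divide_distrib ac_simps)
  also have "\<dots> = R\<^sup>2 / 2"
    unfolding g l using D \<open>R > 0\<close> \<open>M > 0\<close> by (simp add: power2_eq_square)
  finally show "(\<Sum>i=1..N. real (y i) * (c i - xA) / (l + (l * a) * (c i - xA))) = (xB - xA)\<^sup>2 / 2"
    by (simp add: R_def)
qed

theorem mainTheorem11:
  fixes N :: nat and xA xB :: real and w c :: "nat \<Rightarrow> real" and y :: "nat \<Rightarrow> nat"
  assumes "N \<ge> 2"
    and "xA < xB"
    and "\<forall>i\<in>{1..N}. w i > 0"
    and "\<forall>i\<in>{1..N}. c i = xA + (\<Sum>j=1..<i. w j) + w i / 2"
    and "(\<Sum>i=1..N. w i) = xB - xA"
    and "nocc N y \<ge> 2"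
    and "acceptable N xA xB c y a1"
    and "acceptable N xA xB c y a2"
  shows "a1 = a2 \<and>
    (\<lambda>x. lam N xA xB y a1 * (1 + a1 * (x - xA))) = (\<lambda>x. lam N xA xB y a2 * (1 + a2 * (x - xA)))"
proof -
  obtain i j where ij: "i \<in> {1..N}" "j \<in> {1..N}" "i \<noteq> j" "y i \<ge> 1" "y j \<ge> 1"
    using two_occupied_bins[OF assms(6)] .
  have "c i \<noteq> c j"
    using bin_centers_strict_mono[OF assms(3,4)] ij(1-3) by (metis linorder_neqE_nat less_irrefl)
  define l1 l2 where "l1 = lam N xA xB y a1" and "l2 = lam N xA xB y a2"
  have "Mtot N y > 0"
    using Mtot_pos ij(1,4) .
  note eq1 = acceptable_likelihood_equations[OF assms(7,2) \<open>Mtot N y > 0\<close>, folded l1_def]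
  note eq2 = acceptable_likelihood_equations[OF assms(8,2) \<open>Mtot N y > 0\<close>, folded l2_def]
  have agree: "l1 + (l1 * a1) * (c k - xA) = l2 + (l2 * a2) * (c k - xA)"
    if "k \<in> {1..N}" "y k \<ge> 1" for k
    using that eq1 eq2
    by (intro affine_eq_on_support_if_moments_eq[where S = "{1..N}" and y = "\<lambda>k. real (y k)"
          and d = "\<lambda>k. c k - xA"]) auto
  have "l1 = l2" "l1 * a1 = l2 * a2"
    using affine_eq_at_two_points[OF agree[OF ij(1,4)] agree[OF ij(2,5)]] \<open>c i \<noteq> c j\<close> by auto
  moreover have "l1 \<noteq> 0"
    using eq1(1)[OF ij(1)] ij(4) by fastforce
  ultimately show ?thesis
    unfolding l1_def l2_def by simp
qed

end
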